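(* When run without a time budget, the main loop of MAPTree terminates after finitely many iterations.
   Context: Let $x_1,\dots,x_N\in\{0,1\}^F$ be a binary dataset $\mathcal X$ with labels $\mathcal Y\in\{0,1\}^N$, $[N]=\{1,\dots,N\}$. For $\mathcal I\subseteq[N]$, $f\in[F]$, $k\in\{0,1\}$ let $\mathcal I|_{f=k}=\{i\in\mathcal I:(x_i)_f=k\}$, $c^k(\mathcal I)=|\{i\in\mathcal I:y_i=k\}|$, $\mathcal V(\mathcal I)=\{f:\mathcal I|_{f=0}\neq\emptyset\text{ and }\mathcal I|_{f=1}\neq\emptyset\}$. Fix $\rho^1,\rho^0>0$, $\alpha\in(0,1)$, $\beta\ge0$; $\ell_{\rm leaf}(c^1,c^0)=B(c^1+\rho^1,c^0+\rho^0)/B(\rho^1,\rho^0)$ ($B$ the Beta function), $p_{\rm split}(d)=\alpha(1+d)^{-\beta}$, $p_{\rm leaf}(d,\mathcal I)=1$ if $\mathcal V(\mathcal I)=\emptyset$ else $1-p_{\rm split}(d)$, $p_{\rm inner}(d,\mathcal I)=0$ if $\mathcal V(\mathcal I)=\emptyset$ else $p_{\rm split}(d)/|\mathcal V(\mathcal I)|$; $-\log0=+\infty$, and a minimum over an empty set is $+\infty$. Graph $\mathcal G=\mathcal G_{\mathcal X,\mathcal Y}$: for nonempty $\mathcal I\subseteq[N]$, $d\in\{0,\dots,F\}$, an OR node $o_{\mathcal I,d}$ with terminal child $t_{\mathcal I,d}$ (edge cost $-\log p_{\rm leaf}(d,\mathcal I)-\log\ell_{\rm leaf}(c^1(\mathcal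 I),c^0(\mathcal I))$); for $d<F$, $f\in\mathcal V(\mathcal I)$, an AND child $a_{\mathcal I,d,f}$ (edge cost $-\log p_{\rm inner}(d,\mathcal I)$) with cost-$0$ edges to $o_{\mathcal I|_{f=0},d+1}$, $o_{\mathcal I|_{f=1},d+1}$; root $r=o_{[N],0}$; only nodes reachable from $r$ kept. Heuristic: $h(o_{\mathcal I,d})=-\max\{\log\ell_{\rm leaf}(c^1(\mathcal I),c^0(\mathcal I)),\log p_{\rm split}(d)+\log\ell_{\rm leaf}(c^1(\mathcal I),0)+\log\ell_{\rm leaf}(0,c^0(\mathcal I))\}$. MAPTree maintains a node set $\mathcal G'$, a set $\mathcal E$ of expanded OR nodes, and values $LB[u],UB[u]\in\mathbb R\cup\{+\infty\}$ for OR nodes ($UB[u]=+\infty$ until set); for an AND node $a$ with children $o_0,o_1$, $LB[a]=LB[o_0]+LB[o_1]$ and $UB[a]=UB[o_0]+UB[o_1]$. Initialize $\mathcal G'=\{r\}$, $\mathcal E=\emptyset$, $LB[r]=h(r)$, $UB[r]=+\infty$. While $LB[r]<UB[r]$ (and optionally while time remains): (1) $o:=r$; while $o\in\mathcal E$, choose an AND child $a^*$ of $o$ minimizing $\mathrm{cost}(o,a)+LB[a]$, with children $o_0$ (value-0 side) and $o_1$, and set $o:=o_0$ if $UB[o_0]-LB[o_0]>UB[o_1]-LB[o_1]$, else $o:=o_1$. (2) Add $o$ to $\mathcal E$ and its terminal child to $\mathcal G'$; for each AND child $a$ of $o$ with children $o_0,o_1$, add $a,o_0,o_1$ to $\mathcal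 G'$ and set $LB[o_0]:=h(o_0)$, $LB[o_1]:=h(o_1)$. (3) Starting from $Q=\{o\}$, repeatedly remove from $Q$ an OR node $u$ of maximal depth, compute $v=\min\{\min_a(\mathrm{cost}(u,a)+LB[a]),\mathrm{cost}(u,t_u)\}$ over the AND children $a$ and terminal child $t_u$ of $u$; if $v>LB[u]$, set $LB[u]:=v$ and add to $Q$ every OR node of $\mathcal G'$ that is the parent of an AND node of $\mathcal G'$ having $u$ as child. (4) The same with $UB$ in place of $LB$, updating when $v<UB[u]$. Output $\mathrm{getSolution}(r)$, where for an OR node $u$ with terminal child $t$: if $u$ has no AND child or $\mathrm{cost}(u,t)\le\min_a(\mathrm{cost}(u,a)+UB[a])$, return $\{u,t\}$; else, with $a^*$ attaining the minimum and children $u_0,u_1$, return $\{u,a^*\}\cup\mathrm{getSolution}(u_0)\cup\mathrm{getSolution}(u_1)$. *)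

theory Defs
  imports "HOL-Analysis.Analysis"
begin

(* An OR node o_{I,d} is represented by the pair (I,d); the AND node a_{I,d,f}
   by ANDn (I,d) f; the terminal node t_{I,d} by TERMn (I,d). *)
type_synonym ornode = "nat set \<times> nat"

datatype gnode = ORn ornode | ANDn ornode nat | TERMn ornode

(* control location of the algorithm (small-step semantics, incl. inner loops) *)
datatype phase =
    Check
  | Select ornode                       (* step (1), current node o *)
  | PropLB ornode "ornode set"          (* step (3): expanded node o, queue Q *)
  | PropUB "ornode set"                 (* step (4): queue Q *)
  | Done

record mstate =
  Gp :: "gnode set"
  Ex :: "ornode set"
  LB :: "ornode \<Rightarrow> ereal"
  UB :: "ornode \<Rightarrow> ereal"
  ph :: phase

definition mlog :: "real \<Rightarrow> ereal" where
  "mlog x = (if x = 0 then \<infinity> else ereal (- ln x))"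

(* Parameters: N, F; X i f  <->  (x_i)_f = 1 ; Y i <-> y_i = 1;
   r1 = rho^1, r0 = rho^0, al = alpha, be = beta. *)
locale maptree =
  fixes N F :: nat and X :: "nat \<Rightarrow> nat \<Rightarrow> bool" and Y :: "nat \<Rightarrow> bool"
    and r1 r0 al be :: real
begin

definition restr :: "nat set \<Rightarrow> nat \<Rightarrow> bool \<Rightarrow> nat set" where
  "restr I f k = {i \<in> I. X i f = k}"

definition cnt1 :: "nat set \<Rightarrow> nat" where "cnt1 I = card {i \<in> I. Y i}"
definition cnt0 :: "nat set \<Rightarrow> nat" where "cnt0 I = card {i \<in> I. \<not> Y i}"

definition V :: "nat set \<Rightarrow> nat set" where
  "V I = {f \<in> {1..F}. restr I f False \<noteq> {} \<and> restr I f True \<noteq> {}}"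

definition lleaf :: "nat \<Rightarrow> nat \<Rightarrow> real" where
  "lleaf c1 c0 = Beta (real c1 + r1) (real c0 + r0) / Beta r1 r0"

definition psplit :: "nat \<Rightarrow> real" where
  "psplit d = al * (1 + real d) powr (- be)"

definition pleaf :: "nat \<Rightarrow> nat set \<Rightarrow> real" where
  "pleaf d I = (if V I = {} then 1 else 1 - psplit d)"

definition pinner :: "nat \<Rightarrow> nat set \<Rightarrow> real" where
  "pinner d I = (if V I = {} then 0 else psplit d / real (card (V I)))"

(* features f such that the AND child a_{I,d,f} exists *)
definition andch :: "ornode \<Rightarrow> nat set" where
  "andch o' = {f. snd o' < F \<and> f \<in> V (fst o')}"

definition ch0 :: "ornode \<Rightarrow> nat \<Rightarrow> ornode" where
  "ch0 o' f = (restr (fst o') f False, Suc (snd o'))"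
definition ch1 :: "ornode \<Rightarrow> nat \<Rightarrow> ornode" where
  "ch1 o' f = (restr (fst o') f True, Suc (snd o'))"

definition cost_term :: "ornode \<Rightarrow> ereal" where
  "cost_term o' = mlog (pleaf (snd o') (fst o')) + mlog (lleaf (cnt1 (fst o')) (cnt0 (fst o')))"

definition cost_and :: "ornode \<Rightarrow> ereal" where
  "cost_and o' = mlog (pinner (snd o') (fst o'))"

definition h :: "ornode \<Rightarrow> real" where
  "h o' = - max (ln (lleaf (cnt1 (fst o')) (cnt0 (fst o'))))
                (ln (psplit (snd o')) + ln (lleaf (cnt1 (fst o')) 0) + ln (lleaf 0 (cnt0 (fst o'))))"

definition root :: ornode where "root = ({1..N}, 0)"

definition andval :: "(ornode \<Rightarrow> ereal) \<Rightarrow> ornode \<Rightarrow> nat \<Rightarrow> ereal" where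
  "andval B o' f = B (ch0 o' f) + B (ch1 o' f)"

(* v = min { min_a (cost(u,a) + B[a]), cost(u,t_u) }  (min over empty set = +infinity) *)
definition newval :: "(ornode \<Rightarrow> ereal) \<Rightarrow> ornode \<Rightarrow> ereal" where
  "newval B u = min (INF f\<in>andch u. cost_and u + andval B u f) (cost_term u)"

definition parents :: "mstate \<Rightarrow> ornode \<Rightarrow> ornode set" where
  "parents s u = {p. ORn p \<in> Gp s \<and> (\<exists>f. ANDn p f \<in> Gp s \<and> (ch0 p f = u \<or> ch1 p f = u))}"

(* step (2) *)
definition expand :: "mstate \<Rightarrow> ornode \<Rightarrow> mstate" where
  "expand s o' = s\<lparr> Ex := insert o' (Ex s),
     Gp := Gp s \<union> {TERMn o'} \<union> (\<Union>f\<in>andch o'. {ANDn o' f, ORn (ch0 o' f), ORn (ch1 o' f)}),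
     LB := (\<lambda>u. if (\<exists>f\<in>andch o'. u = ch0 o' f \<or> u = ch1 o' f) then ereal (h u) else LB s u) \<rparr>"

definition init :: mstate where
  "init = \<lparr> Gp = {ORn root}, Ex = {}, LB = (\<lambda>_. undefined)(root := ereal (h root)),
            UB = (\<lambda>_. \<infinity>), ph = Check \<rparr>"

(* One elementary step of MAPTree (all nondeterministic choices / tie-breaks allowed) *)
inductive step :: "mstate \<Rightarrow> mstate \<Rightarrow> bool" where
  check_go: "ph s = Check \<Longrightarrow> LB s root < UB s root \<Longrightarrow> step s (s\<lparr>ph := Select root\<rparr>)"
| check_stop: "ph s = Check \<Longrightarrow> \<not> LB s root < UB s root \<Longrightarrow> step s (s\<lparr>ph := Done\<rparr>)"
| select_down: "ph s = Select o' \<Longrightarrow> o' \<in> Ex s \<Longrightarrow> f \<in> andch o' \<Longrightarrow>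
     (\<forall>g\<in>andch o'. cost_and o' + andval (LB s) o' f \<le> cost_and o' + andval (LB s) o' g) \<Longrightarrow>
     step s (s\<lparr>ph := Select (if UB s (ch0 o' f) - LB s (ch0 o' f) > UB s (ch1 o' f) - LB s (ch1 o' f)
                                then ch0 o' f else ch1 o' f)\<rparr>)"
| select_expand: "ph s = Select o' \<Longrightarrow> o' \<notin> Ex s \<Longrightarrow>
     step s ((expand s o')\<lparr>ph := PropLB o' {o'}\<rparr>)"
| propLB: "ph s = PropLB o' Q \<Longrightarrow> u \<in> Q \<Longrightarrow> (\<forall>w\<in>Q. snd w \<le> snd u) \<Longrightarrow>
     step s (if newval (LB s) u > LB s u
             then s\<lparr>LB := (LB s)(u := newval (LB s) u), ph := PropLB o' (Q - {u} \<union> parents s u)\<rparr>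
             else s\<lparr>ph := PropLB o' (Q - {u})\<rparr>)"
| propLB_done: "ph s = PropLB o' {} \<Longrightarrow> step s (s\<lparr>ph := PropUB {o'}\<rparr>)"
| propUB: "ph s = PropUB Q \<Longrightarrow> u \<in> Q \<Longrightarrow> (\<forall>w\<in>Q. snd w \<le> snd u) \<Longrightarrow>
     step s (if newval (UB s) u < UB s u
             then s\<lparr>UB := (UB s)(u := newval (UB s) u), ph := PropUB (Q - {u} \<union> parents s u)\<rparr>
             else s\<lparr>ph := PropUB (Q - {u})\<rparr>)"
| propUB_done: "ph s = PropUB {} \<Longrightarrow> step s (s\<lparr>ph := Check\<rparr>)"

end

end

theory Submission
  imports Defs "HOL-Library.Multiset_Order"
begin

text \<open>
  Each pass of the main loop expands an OR node that was not expanded before, and all OR nodes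
  that can ever be selected lie in the finite set of pairs \<open>(I, d)\<close> with \<open>I \<subseteq> [N]\<close> and \<open>d \<le> F\<close>.
  Within a pass, the descent of step (1) increases the depth, which stays below \<open>F\<close>, and each
  propagation step replaces the deepest queued node by its parents, which are strictly
  shallower; so the multiset of queued depths decreases.  Hence a lexicographic rank decreases
  with every elementary step.
\<close>

lemma image_mset_mset_set_replace_smaller:
  fixes key :: "'a \<Rightarrow> 'b::order"
  assumes "finite Q" "finite P" "u \<in> Q" "\<forall>p\<in>P. key p < key u"
  shows "image_mset key (mset_set (Q - {u} \<union> P)) < image_mset key (mset_set Q)"
proof -
  define A where "A = Q - {u}"
  define P' where "P' = P - A"
  have finite: "finite A" "finite P'" using assms unfolding A_def P'_def by auto
  have "mset_set (Q - {u} \<union> P) = mset_set A + mset_set P'"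
    using mset_set_Union[OF finite] unfolding A_def P'_def by (metis Diff_disjoint Un_Diff_cancel)
  moreover have "mset_set Q = mset_set A + {#u#}"
    using assms(1,3) unfolding A_def by (simp add: mset_set.remove)
  moreover have "multp (<) (image_mset key (mset_set A) + image_mset key (mset_set P'))
                           (image_mset key (mset_set A) + {#key u#})"
    by (rule one_step_implies_multp) (use assms finite in \<open>auto simp: P'_def\<close>)
  ultimately show ?thesis by (simp add: less_multiset_def)
qed

definition depths :: "ornode set \<Rightarrow> nat multiset" where
  "depths Q = image_mset snd (mset_set Q)"

context maptree
begin

definition nodes :: "ornode set" where
  "nodes = {o'. fst o' \<subseteq> {1..N} \<and> snd o' \<le> F}"

lemma finite_nodes: "finite nodes"
proof (rule finite_subset)
  show "nodes \<subseteq> Pow {1..N} \<times> {..F}" unfolding nodes_def by auto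
qed auto

lemma root_in_nodes: "root \<in> nodes"
  unfolding root_def nodes_def by simp

lemma andch_depth_less: "f \<in> andch o' \<Longrightarrow> snd o' < F"
  unfolding andch_def by simp

lemma children_in_nodes:
  assumes "o' \<in> nodes" "f \<in> andch o'"
  shows "ch0 o' f \<in> nodes" "ch1 o' f \<in> nodes"
  using assms andch_depth_less[OF assms(2)] by (auto simp: nodes_def ch0_def ch1_def restr_def)

lemma finite_andch: "finite (andch o')"
  by (rule finite_subset[of _ "{1..F}"]) (auto simp: andch_def V_def)

lemma parents_depth_less: "p \<in> parents s u \<Longrightarrow> snd p < snd u"
  unfolding parents_def ch0_def ch1_def by auto

lemma finite_parents: "finite (Gp s) \<Longrightarrow> finite (parents s u)"
  by (rule finite_subset[of _ "ORn -` Gp s"])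
     (auto simp: parents_def intro: finite_vimageI simp: inj_def)

lemma depths_queue_step_less:
  assumes "finite (Gp s)" "finite Q" "u \<in> Q"
  shows "depths (Q - {u} \<union> parents s u) < depths Q" "depths (Q - {u}) < depths Q"
proof -
  show "depths (Q - {u} \<union> parents s u) < depths Q"
    unfolding depths_def
    by (rule image_mset_mset_set_replace_smaller)
       (use assms finite_parents parents_depth_less in auto)
  have "depths (Q - {u} \<union> {}) < depths Q"
    unfolding depths_def by (rule image_mset_mset_set_replace_smaller) (use assms in auto)
  then show "depths (Q - {u}) < depths Q" by simp
qed

definition invariant :: "mstate \<Rightarrow> bool" where
  "invariant s \<longleftrightarrow> finite (Gp s) \<and>
     (\<forall>o'. ph s = Select o' \<longrightarrow> o' \<in> nodes) \<and>
     (\<forall>o' Q. ph s = PropLB o' Q \<longrightarrow> finite Q) \<and>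
     (\<forall>Q. ph s = PropUB Q \<longrightarrow> finite Q)"

lemma invariant_init: "invariant init"
  unfolding invariant_def init_def using root_in_nodes by auto

lemma step_invariant:
  assumes "step s s'" "invariant s"
  shows "invariant s'"
  using assms
proof (induction rule: step.induct)
  case (select_down s o' f)
  then show ?case using children_in_nodes by (auto simp: invariant_def)
next
  case (select_expand s o')
  then show ?case using finite_andch[of o'] by (auto simp: invariant_def expand_def)
qed (auto simp: invariant_def root_in_nodes finite_parents)

fun phase_rank :: "phase \<Rightarrow> nat \<times> nat multiset \<times> nat" where
  "phase_rank (PropLB _ Q) = (3, depths Q, 0)"
| "phase_rank (PropUB Q) = (2, depths Q, 0)"
| "phase_rank Check = (1, {#}, 0)"
| "phase_rank (Select o') = (0, {#}, F - snd o')"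
| "phase_rank Done = (0, {#}, 0)"

definition rank :: "mstate \<Rightarrow> nat \<times> nat \<times> nat multiset \<times> nat" where
  "rank s = (card (nodes - Ex s), phase_rank (ph s))"

definition rank_less :: "(mstate \<times> mstate) set" where
  "rank_less = inv_image (less_than <*lex*> less_than <*lex*> {(M, M'). M < M'} <*lex*> less_than) rank"

lemma wf_rank_less: "wf rank_less"
  unfolding rank_less_def by (intro wf_inv_image wf_lex_prod wf_less_than wf_less_multiset)

lemma card_nodes_Diff_insert_less:
  assumes "o' \<in> nodes" "o' \<notin> E"
  shows "card (nodes - insert o' E) < card (nodes - E)"
proof -
  have "nodes - insert o' E = (nodes - E) - {o'}" by blast
  then show ?thesis using card_Diff1_less[of "nodes - E" o'] finite_nodes assms by simp
qed

lemma step_rank_less: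
  assumes "step s s'" "invariant s"
  shows "(s', s) \<in> rank_less"
  using assms
proof (induction rule: step.induct)
  case (select_down s o' f)
  then have "snd o' < F" by (simp add: andch_depth_less)
  then show ?case using select_down by (auto simp: rank_less_def rank_def ch0_def ch1_def)
next
  case (select_expand s o')
  then have "card (nodes - insert o' (Ex s)) < card (nodes - Ex s)"
    by (intro card_nodes_Diff_insert_less) (auto simp: invariant_def)
  then show ?case using select_expand by (simp add: rank_less_def rank_def expand_def)
next
  case (propLB s o' Q u)
  then show ?case
    using depths_queue_step_less[of s Q u] by (auto simp: invariant_def rank_less_def rank_def)
next
  case (propUB s Q u)
  then show ?case
    using depths_queue_step_less[of s Q u] by (auto simp: invariant_def rank_less_def rank_def)
qed (auto simp: rank_less_def rank_def)

lemma no_infinite_run: "\<not> (\<exists>run. run 0 = init \<and> (\<forall>n. step (run n) (run (Suc n))))"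
proof
  assume "\<exists>run. run 0 = init \<and> (\<forall>n. step (run n) (run (Suc n)))"
  then obtain run where start: "run 0 = init" and steps: "\<forall>n. step (run n) (run (Suc n))"
    by blast
  have "invariant (run n)" for n
    by (induction n) (use start invariant_init steps step_invariant in auto)
  then have "(run (Suc n), run n) \<in> rank_less" for n
    using steps step_rank_less by blast
  then show False
    using wf_rank_less unfolding wf_iff_no_infinite_down_chain by blast
qed

end

theorem theorem9:
  fixes N F :: nat and X :: "nat \<Rightarrow> nat \<Rightarrow> bool" and Y :: "nat \<Rightarrow> bool"
    and r1 r0 al be :: real
  assumes "0 < N" and "0 < r1" and "0 < r0" and "0 < al" and "al < 1" and "0 \<le> be"
  shows "\<not> (\<exists>run :: nat \<Rightarrow> mstate. run 0 = maptree.init N Y r1 r0 al be \<and>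
              (\<forall>n. maptree.step N F X Y r1 r0 al be (run n) (run (Suc n))))"
  by (rule maptree.no_infinite_run)

end
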